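(* Let $K=\mathbb{R}$ and assume $\tau_{(i)}>0$, $\eta_{(i)}>-1$, $\eta_{(i)}\neq0$ for all $i\in\Omega$, where $|\Omega|=n$. Let $\Theta=\{\pi(\Omega,M)\mid M\in\mathcal{I}(\overline{\mathbf{P}})\}$. Then $|\Theta|\geqslant n+1$, and the following are equivalent: (1) $|\Theta|=n+1$; (2) for any $C,D\in\mathcal{I}(\overline{\mathbf{P}})$, $|C|=|D|$ implies $\pi(\Omega,C)=\pi(\Omega,D)$; (3) for any $C,D\in\mathcal{I}(\overline{\mathbf{P}})$, $\pi(\Omega,C)=\pi(\Omega,D)$ if and only if $|C|=|D|$; (4) $\mathbf{P}$ is hierarchical, and for any $u,v\in\Omega$ with $\mathrm{len}(u)=\mathrm{len}(v)$ we have $\eta_{(u)}=\eta_{(v)}$.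
   Context: $\Omega$ is a finite set and $\mathbf{P}=(\Omega,\preccurlyeq_{\mathbf{P}})$ a poset; $\overline{\mathbf{P}}$ is the dual poset and $\mathcal{I}(\overline{\mathbf{P}})$ its set of ideals (up-closed subsets of $\mathbf{P}$). For $Y\subseteq\Omega$: $\max(Y)$ is the set of maximal elements of $Y$ w.r.t. $\preccurlyeq_{\mathbf{P}}$; $\mathcal{I}(Y)$ is the set of down-closed subsets of $Y$. $\tau,\eta\in\mathbb{R}^{\Omega}$. For $D,I\subseteq\Omega$, $\varphi(D,I)=(-1)^{|I\cap D|}\big(\prod_{i\in I-\max(I)}\tau_{(i)}\big)\big(\prod_{i\in\max(I)-D}\eta_{(i)}\big)$ if $I\cap D\subseteq\max(I)$, and $0$ otherwise; for $D\subseteq Y\subseteq\Omega$, $\pi(Y,D)=\sum_{I\in\mathcal{I}(Y)}\varphi(D,I)x^{|I|}\in\mathbb{R}[x]$. $\mathrm{len}(y)$ is the largest cardinality of a chain in $\mathbf{P}$ with greatest element $y$; $\mathbf{P}$ is hierarchical if $\mathrm{len}(u)+1\leqslant\mathrm{len}(v)$ implies $u\preccurlyeq_{\mathbf{P}}v$. *)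

theory Defs
  imports "HOL-Computational_Algebra.Polynomial"
begin

definition is_poset :: "'a set \<Rightarrow> ('a \<Rightarrow> 'a \<Rightarrow> bool) \<Rightarrow> bool" where
  "is_poset Om le \<longleftrightarrow>
     (\<forall>x\<in>Om. le x x) \<and>
     (\<forall>x\<in>Om. \<forall>y\<in>Om. le x y \<and> le y x \<longrightarrow> x = y) \<and>
     (\<forall>x\<in>Om. \<forall>y\<in>Om. \<forall>z\<in>Om. le x y \<and> le y z \<longrightarrow> le x z)"

definition maxel :: "('a \<Rightarrow> 'a \<Rightarrow> bool) \<Rightarrow> 'a set \<Rightarrow> 'a set" where
  "maxel le Y = {y \<in> Y. \<forall>z\<in>Y. le y z \<longrightarrow> z = y}"

definition down_sets :: "('a \<Rightarrow> 'a \<Rightarrow> bool) \<Rightarrow> 'a set \<Rightarrow> 'a set set" where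
  "down_sets le Y = {I. I \<subseteq> Y \<and> (\<forall>x\<in>I. \<forall>y\<in>Y. le y x \<longrightarrow> y \<in> I)}"

text \<open>Ideals of the dual poset: up-closed subsets of Om.\<close>
definition up_sets :: "('a \<Rightarrow> 'a \<Rightarrow> bool) \<Rightarrow> 'a set \<Rightarrow> 'a set set" where
  "up_sets le Om = {M. M \<subseteq> Om \<and> (\<forall>x\<in>M. \<forall>y\<in>Om. le x y \<longrightarrow> y \<in> M)}"

definition phi :: "('a \<Rightarrow> 'a \<Rightarrow> bool) \<Rightarrow> ('a \<Rightarrow> real) \<Rightarrow> ('a \<Rightarrow> real) \<Rightarrow> 'a set \<Rightarrow> 'a set \<Rightarrow> real" where
  "phi le \<tau> \<eta> D I =
     (if I \<inter> D \<subseteq> maxel le I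
      then (-1) ^ card (I \<inter> D) * (\<Prod>i\<in>I - maxel le I. \<tau> i) * (\<Prod>i\<in>maxel le I - D. \<eta> i)
      else 0)"

definition piP :: "('a \<Rightarrow> 'a \<Rightarrow> bool) \<Rightarrow> ('a \<Rightarrow> real) \<Rightarrow> ('a \<Rightarrow> real) \<Rightarrow> 'a set \<Rightarrow> 'a set \<Rightarrow> real poly" where
  "piP le \<tau> \<eta> Y D = (\<Sum>I\<in>down_sets le Y. monom (phi le \<tau> \<eta> D I) (card I))"

definition is_chain :: "'a set \<Rightarrow> ('a \<Rightarrow> 'a \<Rightarrow> bool) \<Rightarrow> 'a set \<Rightarrow> bool" where
  "is_chain Om le C \<longleftrightarrow> C \<subseteq> Om \<and> (\<forall>x\<in>C. \<forall>y\<in>C. le x y \<or> le y x)"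

definition len :: "'a set \<Rightarrow> ('a \<Rightarrow> 'a \<Rightarrow> bool) \<Rightarrow> 'a \<Rightarrow> nat" where
  "len Om le y = Max {card C | C. is_chain Om le C \<and> y \<in> C \<and> (\<forall>c\<in>C. le c y)}"

definition hierarchical :: "'a set \<Rightarrow> ('a \<Rightarrow> 'a \<Rightarrow> bool) \<Rightarrow> bool" where
  "hierarchical Om le \<longleftrightarrow> (\<forall>u\<in>Om. \<forall>v\<in>Om. len Om le u + 1 \<le> len Om le v \<longrightarrow> le u v)"

end

theory Submission
  imports Defs "HOL-Combinatorics.Transposition"
begin

(* Order polynomials lexicographically by their coefficients, lowest degree first. For an up-set M
  and d in Om - M, pi(Om, M + {d}) agrees with pi(Om, M) below degree |down d| and is smaller by
  (1 + eta d) * prod tau (down d - {d}) > 0 in that degree. Removing minimal elements and adding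
  maximal ones thus puts at least |M| values of Theta above pi(Om, M) and at least n - |M| below it,
  so |Theta| >= n + 1; in case of equality pi(Om, M) is the element of rank |M|, whence (3), while
  (2) clearly leaves at most n + 1 values.
  For (2) => (4), incomparable u and v give the up-sets (Om - (down u Un down v)) + {u} and + {v}
  of equal size; their polynomials agree, so |down u| = |down v| and the weights
  (1 + eta x) * prod tau (down x - {x}) of u and v agree. Hence comparability is decided by
  |down x|, P is hierarchical, and equal weights on a level force equal eta. For (4) => (2),
  transposing two elements of the same level is an order automorphism fixing pi, and up-sets of
  equal size are connected by such transpositions. *)

section \<open>Ranks in finite strict orders\<close>

lemma card_strictly_above_ge:
  fixes r :: "'b \<Rightarrow> 'b \<Rightarrow> bool" and f :: "'a \<Rightarrow> 'b" and g :: "'a \<Rightarrow> nat"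
  assumes trans: "transp r" and irrefl: "\<And>t. \<not> r t t" and fin: "finite (f ` S)"
    and descend: "\<And>x. x \<in> S \<Longrightarrow> 0 < g x \<Longrightarrow> \<exists>y\<in>S. g y = g x - 1 \<and> r (f x) (f y)"
    and x: "x \<in> S"
  shows "g x \<le> card {t \<in> f ` S. r (f x) t}"
  using x
proof (induction "g x" arbitrary: x)
  case 0
  then show ?case by simp
next
  case (Suc n x)
  then obtain y where y: "y \<in> S" "g y = n" and xy: "r (f x) (f y)"
    using descend by fastforce
  have "{t \<in> f ` S. r (f y) t} \<subset> {t \<in> f ` S. r (f x) t}"
    using y xy trans irrefl by (auto dest: transpD)
  then have "card {t \<in> f ` S. r (f y) t} < card {t \<in> f ` S. r (f x) t}"
    using fin by (simp add: psubset_card_mono)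
  with Suc.hyps(1)[OF y(2)[symmetric] y(1)] Suc.hyps(2) y(2) show ?case
    by simp
qed

lemma card_above_below_partition:
  fixes r :: "'b \<Rightarrow> 'b \<Rightarrow> bool"
  assumes trans: "transp r" and irrefl: "\<And>t. \<not> r t t"
    and total: "\<And>s t. s \<noteq> t \<Longrightarrow> r s t \<or> r t s"
    and fin: "finite T" and p: "p \<in> T"
  shows "card {t \<in> T. r p t} + card {t \<in> T. r t p} + 1 = card T"
proof -
  let ?A = "{t \<in> T. r p t}" and ?B = "{t \<in> T. r t p}"
  have T: "T = insert p (?A \<union> ?B)"
    using total p by blast
  have "?A \<inter> ?B = {}"
    using trans irrefl by (auto dest: transpD)
  moreover have "p \<notin> ?A \<union> ?B"
    using irrefl by blast
  moreover have "finite ?A" "finite ?B"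
    using fin by simp_all
  ultimately have "card (insert p (?A \<union> ?B)) = card ?A + card ?B + 1"
    by (simp add: card_Un_disjoint)
  then show ?thesis
    using T by simp
qed

lemma inj_on_card_above:
  fixes r :: "'b \<Rightarrow> 'b \<Rightarrow> bool"
  assumes trans: "transp r" and irrefl: "\<And>t. \<not> r t t"
    and total: "\<And>s t. s \<noteq> t \<Longrightarrow> r s t \<or> r t s" and fin: "finite T"
  shows "inj_on (\<lambda>p. card {t \<in> T. r p t}) T"
proof (rule inj_onI)
  have less: "card {t \<in> T. r q t} < card {t \<in> T. r p t}" if "q \<in> T" "r p q" for p q
  proof -
    have "{t \<in> T. r q t} \<subset> {t \<in> T. r p t}"
      using that trans irrefl by (auto dest: transpD)
    then show ?thesis
      using fin by (simp add: psubset_card_mono)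
  qed
  fix p q
  assume "p \<in> T" "q \<in> T" and eq: "card {t \<in> T. r p t} = card {t \<in> T. r q t}"
  then show "p = q"
    using less[of q p] less[of p q] total[of p q] by auto
qed

lemma card_image_le_card_image_if_factors:
  assumes fin: "finite S" and factors: "\<And>x y. x \<in> S \<Longrightarrow> y \<in> S \<Longrightarrow> g x = g y \<Longrightarrow> f x = f y"
  shows "card (f ` S) \<le> card (g ` S)"
proof -
  have "f x = f (inv_into S g (g x))" if "x \<in> S" for x
    using that by (intro factors) (auto simp: inv_into_into f_inv_into_f)
  then have "f ` S = (\<lambda>k. f (inv_into S g k)) ` g ` S"
    by (simp add: image_image cong: image_cong)
  then show ?thesis
    using fin by (metis card_image_le finite_imageI)
qed

section \<open>Lexicographic order on polynomials\<close>

definition poly_lex_less :: "'a::{zero,linorder} poly \<Rightarrow> 'a poly \<Rightarrow> bool" where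
  "poly_lex_less p q \<longleftrightarrow> (\<exists>k. coeff p k < coeff q k \<and> (\<forall>j<k. coeff p j = coeff q j))"

lemma poly_lex_less_irrefl: "\<not> poly_lex_less p p"
  unfolding poly_lex_less_def by auto

lemma transp_poly_lex_less: "transp poly_lex_less"
proof (rule transpI)
  fix p q r :: "'a poly"
  assume "poly_lex_less p q" "poly_lex_less q r"
  then obtain k l where
    k: "coeff p k < coeff q k" "\<forall>j<k. coeff p j = coeff q j" and
    l: "coeff q l < coeff r l" "\<forall>j<l. coeff q j = coeff r j"
    unfolding poly_lex_less_def by blast
  show "poly_lex_less p r"
    unfolding poly_lex_less_def
    by (rule exI[of _ "min k l"], cases k l rule: linorder_cases) (use k l in auto)
qed

lemma poly_lex_less_total:
  assumes "p \<noteq> q"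
  shows "poly_lex_less p q \<or> poly_lex_less q p"
proof -
  obtain k where k: "coeff p k \<noteq> coeff q k"
    using assms poly_eqI by blast
  define m where "m = (LEAST k. coeff p k \<noteq> coeff q k)"
  have "coeff p m \<noteq> coeff q m"
    unfolding m_def using k by (rule LeastI)
  moreover have "\<forall>j<m. coeff p j = coeff q j"
    unfolding m_def using not_less_Least by blast
  ultimately show ?thesis
    unfolding poly_lex_less_def by (metis linorder_neqE)
qed

lemma compl_down_set_in_up_sets: "I \<in> down_sets le Om \<Longrightarrow> Om - I \<in> up_sets le Om"
  unfolding down_sets_def up_sets_def by blast

lemma down_sets_Un: "I \<in> down_sets le Y \<Longrightarrow> J \<in> down_sets le Y \<Longrightarrow> I \<union> J \<in> down_sets le Y"
  unfolding down_sets_def by blast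

lemma up_sets_eq_down_sets_dual: "up_sets le Om = down_sets (\<lambda>x y. le y x) Om"
  unfolding up_sets_def down_sets_def by blast

lemma maxel_subset: "maxel le I \<subseteq> I"
  unfolding maxel_def by auto

lemma phi_cong:
  assumes "I \<inter> D = I \<inter> D'"
  shows "phi le \<tau> \<eta> D I = phi le \<tau> \<eta> D' I"
proof -
  have "maxel le I - D = maxel le I - D'"
    using assms maxel_subset[of le I] by blast
  then show ?thesis
    unfolding phi_def using assms by simp
qed

lemma phi_image_eq:
  assumes inj: "inj \<sigma>" and maxel: "maxel le (\<sigma> ` I) = \<sigma> ` maxel le I"
    and nonmax: "\<sigma> ` (I - maxel le I) = I - maxel le I"
    and eta: "\<And>x. x \<in> maxel le I \<Longrightarrow> \<eta> (\<sigma> x) = \<eta> x"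
  shows "phi le \<tau> \<eta> (\<sigma> ` D) (\<sigma> ` I) = phi le \<tau> \<eta> D I"
proof -
  have inter: "\<sigma> ` I \<inter> \<sigma> ` D = \<sigma> ` (I \<inter> D)"
    using image_Int[OF inj] by simp
  have "\<sigma> ` I - maxel le (\<sigma> ` I) = I - maxel le I"
    using maxel nonmax image_set_diff[OF inj] by simp
  moreover have "maxel le (\<sigma> ` I) - \<sigma> ` D = \<sigma> ` (maxel le I - D)"
    using maxel image_set_diff[OF inj] by simp
  moreover have "prod \<eta> (\<sigma> ` (maxel le I - D)) = prod \<eta> (maxel le I - D)"
    using eta by (simp add: prod.reindex inj_on_subset[OF inj])
  moreover have "card (\<sigma> ` (I \<inter> D)) = card (I \<inter> D)"
    using inj by (simp add: card_image inj_on_subset)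
  moreover have "\<sigma> ` (I \<inter> D) \<subseteq> maxel le (\<sigma> ` I) \<longleftrightarrow> I \<inter> D \<subseteq> maxel le I"
    using maxel inj_image_subset_iff[OF inj] by simp
  ultimately show ?thesis
    unfolding phi_def inter by simp
qed

lemma coeff_piP:
  "coeff (piP le \<tau> \<eta> Y D) k = (\<Sum>I\<in>down_sets le Y. if card I = k then phi le \<tau> \<eta> D I else 0)"
  unfolding piP_def by (simp add: coeff_sum eq_commute)

locale finite_poset =
  fixes Om :: "'a set" and le :: "'a \<Rightarrow> 'a \<Rightarrow> bool"
  assumes finite_Om: "finite Om" and is_poset: "is_poset Om le"
begin

lemma poset_refl: "x \<in> Om \<Longrightarrow> le x x"
  using is_poset unfolding is_poset_def by blast

lemma poset_antisym: "x \<in> Om \<Longrightarrow> y \<in> Om \<Longrightarrow> le x y \<Longrightarrow> le y x \<Longrightarrow> x = y"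
  using is_poset unfolding is_poset_def by blast

lemma poset_trans: "x \<in> Om \<Longrightarrow> y \<in> Om \<Longrightarrow> z \<in> Om \<Longrightarrow> le x y \<Longrightarrow> le y z \<Longrightarrow> le x z"
  using is_poset unfolding is_poset_def by blast

lemma finite_poset_dual: "finite_poset Om (\<lambda>x y. le y x)"
  using finite_Om is_poset unfolding finite_poset_def is_poset_def by blast

lemma down_sets_subset: "I \<in> down_sets le Om \<Longrightarrow> I \<subseteq> Om"
  unfolding down_sets_def by blast

lemma up_sets_subset: "C \<in> up_sets le Om \<Longrightarrow> C \<subseteq> Om"
  unfolding up_sets_def by blast

lemma finite_down_sets: "finite (down_sets le Om)"
  by (rule finite_subset[of _ "Pow Om"]) (auto simp: down_sets_def finite_Om)

lemma finite_up_sets: "finite (up_sets le Om)"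
  by (rule finite_subset[of _ "Pow Om"]) (auto simp: up_sets_def finite_Om)

definition down :: "'a \<Rightarrow> 'a set" where
  "down x = {y \<in> Om. le y x}"

lemma finite_down: "finite (down x)"
  using finite_Om unfolding down_def by simp

lemma self_in_down: "x \<in> Om \<Longrightarrow> x \<in> down x"
  unfolding down_def using poset_refl by simp

lemma down_in_down_sets: "x \<in> Om \<Longrightarrow> down x \<in> down_sets le Om"
  unfolding down_sets_def down_def using poset_trans by blast

lemma strict_down_in_down_sets: "x \<in> Om \<Longrightarrow> down x - {x} \<in> down_sets le Om"
  unfolding down_sets_def down_def using poset_trans poset_antisym by blast

lemma down_subset_down_set: "I \<in> down_sets le Om \<Longrightarrow> x \<in> I \<Longrightarrow> down x \<subseteq> I"
  unfolding down_sets_def down_def by blast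

lemma maxel_down: "x \<in> Om \<Longrightarrow> maxel le (down x) = {x}"
  unfolding maxel_def down_def using poset_refl poset_antisym by auto

lemma card_down_strict_mono:
  assumes "x \<in> Om" "y \<in> Om" "le x y" "x \<noteq> y"
  shows "card (down x) < card (down y)"
proof -
  have "down x \<subset> down y"
    unfolding down_def using assms poset_trans poset_antisym poset_refl by blast
  then show ?thesis
    using finite_down by (simp add: psubset_card_mono)
qed

lemma ex_minimal:
  assumes "A \<subseteq> Om" "A \<noteq> {}"
  shows "\<exists>x\<in>A. \<forall>y\<in>A. le y x \<longrightarrow> y = x"
proof -
  obtain x where x: "x \<in> A" and least: "\<And>y. y \<in> A \<Longrightarrow> \<not> card (down y) < card (down x)"
    using ex_is_arg_min_if_finite[OF finite_subset[OF assms(1) finite_Om] assms(2), of "\<lambda>x. card (down x)"]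
    unfolding is_arg_min_def by blast
  then show ?thesis
    using assms(1) card_down_strict_mono by blast
qed

lemma up_set_remove_minimal:
  assumes C: "C \<in> up_sets le Om" "C \<noteq> {}"
  shows "\<exists>x\<in>C. C - {x} \<in> up_sets le Om"
proof -
  obtain x where "x \<in> C" and minimal: "\<forall>y\<in>C. le y x \<longrightarrow> y = x"
    using ex_minimal[OF up_sets_subset[OF C(1)] C(2)] by blast
  moreover have "C - {x} \<in> up_sets le Om"
    using C(1) minimal unfolding up_sets_def by blast
  ultimately show ?thesis by blast
qed

lemma up_set_insert_maximal:
  assumes C: "C \<in> up_sets le Om" "C \<noteq> Om"
  shows "\<exists>x\<in>Om - C. insert x C \<in> up_sets le Om"
proof -
  interpret dual: finite_poset Om "\<lambda>x y. le y x"
    by (rule finite_poset_dual)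
  obtain x where "x \<in> Om - C" and maximal: "\<forall>y\<in>Om - C. le x y \<longrightarrow> y = x"
    using dual.ex_minimal[of "Om - C"] up_sets_subset[OF C(1)] C(2) by blast
  moreover have "insert x C \<in> up_sets le Om"
    using C(1) maximal \<open>x \<in> Om - C\<close> unfolding up_sets_def by blast
  ultimately show ?thesis by blast
qed

lemma finite_chain_cards: "finite {card C | C. is_chain Om le C \<and> y \<in> C \<and> (\<forall>c\<in>C. le c y)}"
proof (rule finite_subset)
  show "{card C | C. is_chain Om le C \<and> y \<in> C \<and> (\<forall>c\<in>C. le c y)} \<subseteq> {0..card Om}"
    unfolding is_chain_def using card_mono[OF finite_Om] by auto
qed simp

lemma len_ge: "is_chain Om le C \<Longrightarrow> y \<in> C \<Longrightarrow> \<forall>c\<in>C. le c y \<Longrightarrow> card C \<le> len Om le y"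
  unfolding len_def by (rule Max_ge[OF finite_chain_cards]) blast

lemma len_witness:
  assumes "y \<in> Om"
  obtains C where "is_chain Om le C" "y \<in> C" "\<forall>c\<in>C. le c y" "card C = len Om le y"
proof -
  have "is_chain Om le {y}"
    using assms poset_refl unfolding is_chain_def by auto
  then have "{card C | C. is_chain Om le C \<and> y \<in> C \<and> (\<forall>c\<in>C. le c y)} \<noteq> {}"
    using assms poset_refl by blast
  from Max_in[OF finite_chain_cards this] show ?thesis
    using that unfolding len_def by auto
qed

lemma len_strict_mono:
  assumes x: "x \<in> Om" and y: "y \<in> Om" and "le x y" "x \<noteq> y"
  shows "len Om le x < len Om le y"
proof -
  obtain C where C: "is_chain Om le C" "x \<in> C" "\<forall>c\<in>C. le c x" "card C = len Om le x"
    using len_witness[OF x] .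
  have CO: "C \<subseteq> Om"
    using C(1) unfolding is_chain_def by blast
  have below_y: "\<forall>c\<in>insert y C. le c y"
    using C(3) CO poset_trans[OF _ x y] poset_refl[OF y] \<open>le x y\<close> by blast
  then have "is_chain Om le (insert y C)"
    using C(1) CO y unfolding is_chain_def by auto
  from len_ge[OF this _ below_y] have "card (insert y C) \<le> len Om le y"
    by simp
  moreover have "y \<notin> C"
    using C(3) CO assms poset_antisym by blast
  ultimately show ?thesis
    using C(4) finite_subset[OF CO finite_Om] by simp
qed

lemma hierarchical_le_iff:
  assumes "hierarchical Om le" "x \<in> Om" "y \<in> Om"
  shows "le x y \<longleftrightarrow> x = y \<or> len Om le x < len Om le y"
proof
  show "le x y \<Longrightarrow> x = y \<or> len Om le x < len Om le y"
    using len_strict_mono[OF assms(2,3)] by blast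
  show "x = y \<or> len Om le x < len Om le y \<Longrightarrow> le x y"
    using assms poset_refl unfolding hierarchical_def by auto
qed

lemma hierarchical_if_le_iff:
  fixes f :: "'a \<Rightarrow> 'b::linorder"
  assumes le_iff: "\<And>x y. x \<in> Om \<Longrightarrow> y \<in> Om \<Longrightarrow> le x y \<longleftrightarrow> x = y \<or> f x < f y"
  shows "hierarchical Om le"
  unfolding hierarchical_def
proof (intro ballI impI)
  fix u v
  assume u: "u \<in> Om" and v: "v \<in> Om" and len_uv: "len Om le u + 1 \<le> len Om le v"
  show "le u v"
  proof (rule ccontr)
    assume "\<not> le u v"
    then have fvu: "f v \<le> f u"
      using le_iff[OF u v] by auto
    obtain C where C: "is_chain Om le C" "v \<in> C" "\<forall>c\<in>C. le c v" "card C = len Om le v"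
      using len_witness[OF v] .
    have CO: "C \<subseteq> Om"
      using C(1) unfolding is_chain_def by blast
    have below_u: "le c u \<and> c \<noteq> u" if c: "c \<in> C - {v}" for c
    proof -
      have "c \<in> Om" "le c v"
        using c C(3) CO by auto
      then have "f c < f u"
        using le_iff[OF _ v] c fvu by auto
      then show ?thesis
        using le_iff[OF \<open>c \<in> Om\<close> u] by auto
    qed
    let ?C' = "insert u (C - {v})"
    have "is_chain Om le ?C'"
      using C(1) below_u u poset_refl unfolding is_chain_def by blast
    moreover have "\<forall>c\<in>?C'. le c u"
      using below_u poset_refl[OF u] by blast
    ultimately have "card ?C' \<le> len Om le u"
      by (intro len_ge) auto
    moreover have "card ?C' = card C"
    proof -
      have "finite C"
        using finite_subset[OF CO finite_Om] .
      moreover have "u \<notin> C - {v}"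
        using below_u by blast
      ultimately have "card ?C' = Suc (card (C - {v}))"
        by simp
      then show ?thesis
        using card_Suc_Diff1[OF \<open>finite C\<close> C(2)] by simp
    qed
    ultimately show False
      using C(4) len_uv by simp
  qed
qed

definition order_automorphism :: "('a \<Rightarrow> 'a) \<Rightarrow> bool" where
  "order_automorphism \<sigma> \<longleftrightarrow>
     inj \<sigma> \<and> \<sigma> ` Om = Om \<and> (\<forall>x\<in>Om. \<forall>y\<in>Om. le (\<sigma> x) (\<sigma> y) \<longleftrightarrow> le x y)"

lemma down_set_image:
  assumes \<sigma>: "order_automorphism \<sigma>" and I: "I \<in> down_sets le Om"
  shows "\<sigma> ` I \<in> down_sets le Om"
  unfolding down_sets_def
proof (intro CollectI conjI ballI impI)
  have IO: "I \<subseteq> Om"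
    using I by (rule down_sets_subset)
  then show "\<sigma> ` I \<subseteq> Om"
    using \<sigma> unfolding order_automorphism_def by blast
  fix x y
  assume "x \<in> \<sigma> ` I" "y \<in> Om" "le y x"
  then obtain i y' where "i \<in> I" "x = \<sigma> i" "y' \<in> Om" "y = \<sigma> y'"
    using \<sigma> unfolding order_automorphism_def by blast
  then show "y \<in> \<sigma> ` I"
    using \<open>le y x\<close> \<sigma> I IO unfolding order_automorphism_def down_sets_def by blast
qed

lemma down_sets_image:
  assumes "order_automorphism \<sigma>"
  shows "image \<sigma> ` down_sets le Om = down_sets le Om"
proof (rule endo_inj_surj[OF finite_down_sets])
  show "image \<sigma> ` down_sets le Om \<subseteq> down_sets le Om"
    using down_set_image[OF assms] by blast
  show "inj_on (image \<sigma>) (down_sets le Om)"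
    using assms unfolding order_automorphism_def by (meson inj_image_eq_iff inj_onI)
qed

lemma up_set_image:
  assumes "order_automorphism \<sigma>" and "C \<in> up_sets le Om"
  shows "\<sigma> ` C \<in> up_sets le Om"
proof -
  interpret dual: finite_poset Om "\<lambda>x y. le y x"
    by (rule finite_poset_dual)
  have "dual.order_automorphism \<sigma>"
    using assms(1) unfolding order_automorphism_def dual.order_automorphism_def by blast
  then show ?thesis
    using dual.down_set_image assms(2) unfolding up_sets_eq_down_sets_dual by blast
qed

lemma maxel_image:
  assumes \<sigma>: "order_automorphism \<sigma>" and IO: "I \<subseteq> Om"
  shows "maxel le (\<sigma> ` I) = \<sigma> ` maxel le I"
proof -
  have le_iff: "le (\<sigma> x) (\<sigma> y) \<longleftrightarrow> le x y" if "x \<in> I" "y \<in> I" for x y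
    using \<sigma> that IO unfolding order_automorphism_def by blast
  have inj: "inj \<sigma>"
    using \<sigma> unfolding order_automorphism_def by blast
  show ?thesis
    unfolding maxel_def using le_iff inj_eq[OF inj] by auto
qed

lemma piP_image_eq:
  assumes \<sigma>: "order_automorphism \<sigma>" and eta: "\<And>x. x \<in> Om \<Longrightarrow> \<eta> (\<sigma> x) = \<eta> x"
    and nonmax: "\<And>I. I \<in> down_sets le Om \<Longrightarrow> \<sigma> ` (I - maxel le I) = I - maxel le I"
  shows "piP le \<tau> \<eta> Om (\<sigma> ` D) = piP le \<tau> \<eta> Om D"
proof -
  have inj: "inj \<sigma>"
    using \<sigma> unfolding order_automorphism_def by blast
  have phi_eq: "phi le \<tau> \<eta> (\<sigma> ` D) (\<sigma> ` I) = phi le \<tau> \<eta> D I" if I: "I \<in> down_sets le Om" for I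
  proof (rule phi_image_eq[OF inj])
    show "maxel le (\<sigma> ` I) = \<sigma> ` maxel le I"
      using \<sigma> down_sets_subset[OF I] by (rule maxel_image)
    show "\<sigma> ` (I - maxel le I) = I - maxel le I"
      using I by (rule nonmax)
    show "\<eta> (\<sigma> x) = \<eta> x" if "x \<in> maxel le I" for x
      using that maxel_subset[of le I] down_sets_subset[OF I] by (intro eta) blast
  qed
  have "piP le \<tau> \<eta> Om (\<sigma> ` D) =
      (\<Sum>I\<in>image \<sigma> ` down_sets le Om. monom (phi le \<tau> \<eta> (\<sigma> ` D) I) (card I))"
    unfolding piP_def down_sets_image[OF \<sigma>] ..
  also have "\<dots> = (\<Sum>I\<in>down_sets le Om. monom (phi le \<tau> \<eta> (\<sigma> ` D) (\<sigma> ` I)) (card (\<sigma> ` I)))"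
    by (rule sum.reindex_cong[OF inj_on_image[OF inj_on_subset[OF inj]]]) auto
  also have "\<dots> = piP le \<tau> \<eta> Om D"
    unfolding piP_def using phi_eq inj by (intro sum.cong) (auto simp: card_image inj_on_subset)
  finally show ?thesis .
qed

subsection \<open>Hierarchical posets\<close>

context
  assumes hier: "hierarchical Om le"
begin

lemma strict_down_eq_lower_levels:
  "u \<in> Om \<Longrightarrow> down u - {u} = {x \<in> Om. len Om le x < len Om le u}"
  unfolding down_def using hierarchical_le_iff[OF hier] by auto

lemma nonmax_down_set_eq:
  assumes I: "I \<in> down_sets le Om"
  shows "I - maxel le I = {x \<in> Om. \<exists>z\<in>I. len Om le x < len Om le z}"
proof (intro set_eqI iffI)
  have IO: "I \<subseteq> Om"
    using I by (rule down_sets_subset)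
  fix x
  show "x \<in> {x \<in> Om. \<exists>z\<in>I. len Om le x < len Om le z}" if nonmax: "x \<in> I - maxel le I"
  proof -
    obtain z where z: "z \<in> I" "le x z" "z \<noteq> x"
      using nonmax unfolding maxel_def by blast
    moreover have "x \<in> Om" "z \<in> Om"
      using nonmax z IO by auto
    ultimately show ?thesis
      using hierarchical_le_iff[OF hier \<open>x \<in> Om\<close> \<open>z \<in> Om\<close>] by auto
  qed
  show "x \<in> I - maxel le I" if lower: "x \<in> {x \<in> Om. \<exists>z\<in>I. len Om le x < len Om le z}"
  proof -
    obtain z where x: "x \<in> Om" and z: "z \<in> I" "len Om le x < len Om le z"
      using lower by blast
    then have "le x z" "z \<noteq> x"
      using hierarchical_le_iff[OF hier x] IO by auto
    moreover have "x \<in> I"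
      using I x z \<open>le x z\<close> unfolding down_sets_def by blast
    ultimately show ?thesis
      using z unfolding maxel_def by blast
  qed
qed

context
  fixes u v
  assumes u: "u \<in> Om" and v: "v \<in> Om" and same_level: "len Om le u = len Om le v"
begin

lemma len_transpose: "len Om le (transpose u v x) = len Om le x"
  using same_level by (simp add: transpose_def)

lemma order_automorphism_transpose: "order_automorphism (transpose u v)"
  unfolding order_automorphism_def
proof (intro conjI ballI)
  show "inj (transpose u v)"
    by (rule inj_transpose)
  show "transpose u v ` Om = Om"
    using u v by simp
  fix x y
  assume x: "x \<in> Om" and y: "y \<in> Om"
  have "transpose u v x \<in> Om" "transpose u v y \<in> Om"
    using u v x y by (simp_all add: transpose_def)
  then have "le (transpose u v x) (transpose u v y) \<longleftrightarrow>
      transpose u v x = transpose u v y \<or> len Om le (transpose u v x) < len Om le (transpose u v y)"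
    by (rule hierarchical_le_iff[OF hier])
  also have "\<dots> \<longleftrightarrow> x = y \<or> len Om le x < len Om le y"
    by (simp add: len_transpose inj_eq[OF inj_transpose])
  also have "\<dots> \<longleftrightarrow> le x y"
    using hierarchical_le_iff[OF hier x y] by simp
  finally show "le (transpose u v x) (transpose u v y) \<longleftrightarrow> le x y" .
qed

lemma piP_transpose_eq:
  assumes "\<eta> u = \<eta> v"
  shows "piP le \<tau> \<eta> Om (transpose u v ` D) = piP le \<tau> \<eta> Om D"
(* tau need not be invariant: it only enters through the non-maximal part of each down-set,
  which is a union of levels. *)
proof (rule piP_image_eq[OF order_automorphism_transpose])
  show "\<eta> (transpose u v x) = \<eta> x" for x
    using assms by (simp add: transpose_def)
  show "transpose u v ` (I - maxel le I) = I - maxel le I" if "I \<in> down_sets le Om" for I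
    unfolding nonmax_down_set_eq[OF that] using u v same_level by (intro transpose_image_eq) simp
qed

end

lemma same_level_if_exchange:
  assumes C: "C \<in> up_sets le Om" and D: "D \<in> up_sets le Om" and a: "a \<in> C - D" and b: "b \<in> D - C"
  shows "len Om le a = len Om le b"
proof -
  have "a \<in> Om" "b \<in> Om"
    using a b up_sets_subset[OF C] up_sets_subset[OF D] by auto
  moreover have "\<not> le a b" "\<not> le b a"
    using C D a b calculation unfolding up_sets_def by auto
  ultimately show ?thesis
    using hierarchical_le_iff[OF hier] by (meson linorder_neqE_nat)
qed

lemma piP_eq_if_card_eq:
  assumes eta_level: "\<And>u v. u \<in> Om \<Longrightarrow> v \<in> Om \<Longrightarrow> len Om le u = len Om le v \<Longrightarrow> \<eta> u = \<eta> v"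
    and C: "C \<in> up_sets le Om" and D: "D \<in> up_sets le Om" and card_eq: "card C = card D"
  shows "piP le \<tau> \<eta> Om C = piP le \<tau> \<eta> Om D"
  using C card_eq
proof (induction "card (C - D)" arbitrary: C)
  case 0
  have "finite C" "finite D"
    using finite_subset[OF up_sets_subset finite_Om] 0(2) D by auto
  then have "C \<subseteq> D"
    using 0(1) by simp
  then have "C = D"
    using card_subset_eq[OF \<open>finite D\<close>] 0(3) by blast
  then show ?case
    by simp
next
  case (Suc n C)
  have fin: "finite C" "finite D"
    using finite_subset[OF up_sets_subset finite_Om] Suc.prems(1) D by auto
  obtain a where a: "a \<in> C - D"
    using Suc.hyps(2) by (metis card.empty ex_in_conv nat.distinct(1))
  obtain b where b: "b \<in> D - C"
    using a fin Suc.prems(2) by (metis Diff_eq_empty_iff card_subset_eq ex_in_conv)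
  have ab: "a \<in> Om" "b \<in> Om" "len Om le a = len Om le b"
    using a b Suc.prems(1) D up_sets_subset same_level_if_exchange by blast+
  let ?C' = "transpose a b ` C"
  have C': "?C' = insert b (C - {a})"
    using a b by (auto simp: in_transpose_image_iff transpose_def)
  have "piP le \<tau> \<eta> Om ?C' = piP le \<tau> \<eta> Om D"
  proof (rule Suc.hyps(1))
    show "n = card (?C' - D)"
      using Suc.hyps(2) a b fin unfolding C' by (simp add: Diff_insert2[symmetric])
    show "?C' \<in> up_sets le Om"
      using up_set_image[OF order_automorphism_transpose[OF ab] Suc.prems(1)] .
    show "card ?C' = card D"
      using Suc.prems(2) by (simp add: card_image)
  qed
  moreover have "piP le \<tau> \<eta> Om ?C' = piP le \<tau> \<eta> Om C"
    using piP_transpose_eq[OF ab] eta_level[OF ab] .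
  ultimately show ?case
    by simp
qed

end

end

section \<open>Positive weights\<close>

locale weighted_poset = finite_poset +
  fixes \<tau> \<eta> :: "'a \<Rightarrow> real"
  assumes tau_pos: "\<forall>i\<in>Om. \<tau> i > 0" and eta_gt: "\<forall>i\<in>Om. \<eta> i > -1"
begin

abbreviation \<pi> :: "'a set \<Rightarrow> real poly" where
  "\<pi> D \<equiv> piP le \<tau> \<eta> Om D"

definition weight :: "'a \<Rightarrow> real" where
  "weight d = (1 + \<eta> d) * prod \<tau> (down d - {d})"

lemma weight_pos: "d \<in> Om \<Longrightarrow> 0 < weight d"
  unfolding weight_def down_def using tau_pos eta_gt by (intro mult_pos_pos prod_pos) auto

lemma coeff_pi_diff_insert:
  assumes D: "D \<in> up_sets le Om" and d: "d \<in> Om" "d \<notin> D" and k: "k \<le> card (down d)"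
  shows "coeff (\<pi> D) k - coeff (\<pi> (insert d D)) k = (if k = card (down d) then weight d else 0)"
proof -
  have "down d \<inter> D = {}"
    using D d unfolding up_sets_def down_def by blast
  then have at_down: "phi le \<tau> \<eta> D (down d) - phi le \<tau> \<eta> (insert d D) (down d) = weight d"
    using self_in_down[OF d(1)] d(2)
    unfolding phi_def weight_def maxel_down[OF d(1)] by (simp add: algebra_simps insert_Diff_if)
  (* A down-set of size at most |down d| containing d is down d itself; all others meet D and
    insert d D in the same set. *)
  have elsewhere: "phi le \<tau> \<eta> D I = phi le \<tau> \<eta> (insert d D) I"
    if I: "I \<in> down_sets le Om" and card_I: "card I = k" and ne: "I \<noteq> down d" for I
  proof (rule phi_cong)
    have "d \<notin> I"
    proof
      assume "d \<in> I"
      with I have "down d \<subseteq> I"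
        by (rule down_subset_down_set)
      moreover have "finite I"
        using finite_subset[OF down_sets_subset[OF I] finite_Om] .
      ultimately have "down d = I"
        using card_I k by (intro card_seteq) simp_all
      with ne show False
        by simp
    qed
    then show "I \<inter> D = I \<inter> insert d D"
      by blast
  qed
  have "coeff (\<pi> D) k - coeff (\<pi> (insert d D)) k =
      (\<Sum>I\<in>down_sets le Om. if I = down d then (if k = card (down d) then weight d else 0) else 0)"
    unfolding coeff_piP sum_subtractf[symmetric] using at_down elsewhere by (intro sum.cong) auto
  also have "\<dots> = (if k = card (down d) then weight d else 0)"
    using finite_down_sets down_in_down_sets[OF d(1)] by simp
  finally show ?thesis .
qed

lemma pi_insert_lex_less:
  assumes "D \<in> up_sets le Om" "d \<in> Om" "d \<notin> D"
  shows "poly_lex_less (\<pi> (insert d D)) (\<pi> D)"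
  unfolding poly_lex_less_def
proof (intro exI conjI allI impI)
  show "coeff (\<pi> (insert d D)) (card (down d)) < coeff (\<pi> D) (card (down d))"
    using coeff_pi_diff_insert[OF assms order_refl] weight_pos[OF assms(2)] by simp
  show "coeff (\<pi> (insert d D)) j = coeff (\<pi> D) j" if "j < card (down d)" for j
    using coeff_pi_diff_insert[OF assms, of j] that by simp
qed

lemma card_le_card_pi_above:
  assumes "C \<in> up_sets le Om"
  shows "card C \<le> card {t \<in> \<pi> ` up_sets le Om. poly_lex_less (\<pi> C) t}"
proof (rule card_strictly_above_ge[OF transp_poly_lex_less poly_lex_less_irrefl _ _ assms])
  show "finite (\<pi> ` up_sets le Om)"
    using finite_up_sets by simp
  fix M
  assume M: "M \<in> up_sets le Om" and "0 < card M"
  then obtain x where x: "x \<in> M" and M': "M - {x} \<in> up_sets le Om"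
    using up_set_remove_minimal by fastforce
  have "x \<in> Om"
    using x up_sets_subset[OF M] by blast
  with M' have "poly_lex_less (\<pi> (insert x (M - {x}))) (\<pi> (M - {x}))"
    by (intro pi_insert_lex_less) simp_all
  then have "poly_lex_less (\<pi> M) (\<pi> (M - {x}))"
    using x by (simp add: insert_absorb)
  moreover have "card (M - {x}) = card M - 1"
    using x by simp
  ultimately show "\<exists>M'\<in>up_sets le Om. card M' = card M - 1 \<and> poly_lex_less (\<pi> M) (\<pi> M')"
    using M' by blast
qed

lemma card_compl_le_card_pi_below:
  assumes "C \<in> up_sets le Om"
  shows "card Om - card C \<le> card {t \<in> \<pi> ` up_sets le Om. poly_lex_less t (\<pi> C)}"
proof (rule card_strictly_above_ge[where r = "\<lambda>s t. poly_lex_less t s" and g = "\<lambda>M. card Om - card M"])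
  show "transp (\<lambda>s t. poly_lex_less t s)"
    using transp_poly_lex_less by (auto simp: transp_def)
  show "finite (\<pi> ` up_sets le Om)"
    using finite_up_sets by simp
  fix M
  assume M: "M \<in> up_sets le Om" and "0 < card Om - card M"
  then have "M \<noteq> Om"
    by auto
  then obtain x where x: "x \<in> Om - M" and M': "insert x M \<in> up_sets le Om"
    using up_set_insert_maximal[OF M] by blast
  have "card Om - card (insert x M) = card Om - card M - 1"
    using x finite_subset[OF up_sets_subset[OF M] finite_Om] by simp
  then show "\<exists>M'\<in>up_sets le Om. card Om - card M' = card Om - card M - 1 \<and> poly_lex_less (\<pi> M') (\<pi> M)"
    using M' pi_insert_lex_less[OF M] x by blast
qed (use assms poly_lex_less_irrefl in auto)

lemma card_pi_above_below:
  assumes "C \<in> up_sets le Om"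
  shows "card {t \<in> \<pi> ` up_sets le Om. poly_lex_less (\<pi> C) t}
    + card {t \<in> \<pi> ` up_sets le Om. poly_lex_less t (\<pi> C)} + 1 = card (\<pi> ` up_sets le Om)"
  using assms finite_up_sets
  by (intro card_above_below_partition[OF transp_poly_lex_less poly_lex_less_irrefl poly_lex_less_total])
    auto

lemma card_pi_values_ge: "card Om + 1 \<le> card (\<pi> ` up_sets le Om)"
proof -
  have "{} \<in> up_sets le Om"
    unfolding up_sets_def by simp
  from card_compl_le_card_pi_below[OF this] card_pi_above_below[OF this] show ?thesis
    by simp
qed

lemma card_pi_above_eq_if_card_pi_values:
  assumes "card (\<pi> ` up_sets le Om) = card Om + 1" and C: "C \<in> up_sets le Om"
  shows "card {t \<in> \<pi> ` up_sets le Om. poly_lex_less (\<pi> C) t} = card C"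
  using assms card_le_card_pi_above[OF C] card_compl_le_card_pi_below[OF C] card_pi_above_below[OF C]
    card_mono[OF finite_Om up_sets_subset[OF C]]
  by linarith

lemma pi_eq_iff_card_eq_if_card_pi_values:
  assumes card_values: "card (\<pi> ` up_sets le Om) = card Om + 1"
    and C: "C \<in> up_sets le Om" and D: "D \<in> up_sets le Om"
  shows "\<pi> C = \<pi> D \<longleftrightarrow> card C = card D"
proof -
  let ?rank = "\<lambda>p. card {t \<in> \<pi> ` up_sets le Om. poly_lex_less p t}"
  have inj: "inj_on ?rank (\<pi> ` up_sets le Om)"
    using finite_up_sets
    by (intro inj_on_card_above[OF transp_poly_lex_less poly_lex_less_irrefl poly_lex_less_total]) auto
  have rank: "?rank (\<pi> C) = card C" "?rank (\<pi> D) = card D"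
    using card_pi_above_eq_if_card_pi_values[OF card_values] C D by blast+
  show ?thesis
  proof
    show "\<pi> C = \<pi> D \<Longrightarrow> card C = card D"
      using rank by metis
    assume "card C = card D"
    then have "?rank (\<pi> C) = ?rank (\<pi> D)"
      using rank by simp
    then show "\<pi> C = \<pi> D"
      using inj_onD[OF inj] C D by blast
  qed
qed

lemma card_pi_values_le_if_card_determines_pi:
  assumes "\<And>C D. C \<in> up_sets le Om \<Longrightarrow> D \<in> up_sets le Om \<Longrightarrow> card C = card D \<Longrightarrow> \<pi> C = \<pi> D"
  shows "card (\<pi> ` up_sets le Om) \<le> card Om + 1"
proof -
  have "card (\<pi> ` up_sets le Om) \<le> card (card ` up_sets le Om)"
    using finite_up_sets assms by (rule card_image_le_card_image_if_factors)
  also have "\<dots> \<le> card {0..card Om}"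
    using up_sets_subset card_mono[OF finite_Om] by (intro card_mono) auto
  finally show ?thesis
    by simp
qed

lemma card_pi_values_eq_iff_card_determines_pi:
  "card (\<pi> ` up_sets le Om) = card Om + 1 \<longleftrightarrow>
    (\<forall>C\<in>up_sets le Om. \<forall>D\<in>up_sets le Om. card C = card D \<longrightarrow> \<pi> C = \<pi> D)"
proof
  show "\<forall>C\<in>up_sets le Om. \<forall>D\<in>up_sets le Om. card C = card D \<longrightarrow> \<pi> C = \<pi> D"
    if "card (\<pi> ` up_sets le Om) = card Om + 1"
    using pi_eq_iff_card_eq_if_card_pi_values[OF that] by simp
  show "card (\<pi> ` up_sets le Om) = card Om + 1"
    if "\<forall>C\<in>up_sets le Om. \<forall>D\<in>up_sets le Om. card C = card D \<longrightarrow> \<pi> C = \<pi> D"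
    using card_pi_values_ge card_pi_values_le_if_card_determines_pi[OF that[rule_format]] by linarith
qed

lemma card_pi_values_eq_iff_pi_eq_iff_card_eq:
  "card (\<pi> ` up_sets le Om) = card Om + 1 \<longleftrightarrow>
    (\<forall>C\<in>up_sets le Om. \<forall>D\<in>up_sets le Om. \<pi> C = \<pi> D \<longleftrightarrow> card C = card D)"
proof
  show "\<forall>C\<in>up_sets le Om. \<forall>D\<in>up_sets le Om. \<pi> C = \<pi> D \<longleftrightarrow> card C = card D"
    if "card (\<pi> ` up_sets le Om) = card Om + 1"
    using pi_eq_iff_card_eq_if_card_pi_values[OF that] by simp
  show "card (\<pi> ` up_sets le Om) = card Om + 1"
    if "\<forall>C\<in>up_sets le Om. \<forall>D\<in>up_sets le Om. \<pi> C = \<pi> D \<longleftrightarrow> card C = card D"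
    using that unfolding card_pi_values_eq_iff_card_determines_pi by simp
qed

context
  assumes card_det: "\<And>C D. C \<in> up_sets le Om \<Longrightarrow> D \<in> up_sets le Om \<Longrightarrow> card C = card D \<Longrightarrow> \<pi> C = \<pi> D"
begin

lemma incomparable_same_down_card_and_weight:
  assumes u: "u \<in> Om" and v: "v \<in> Om" and incomparable: "\<not> le u v" "\<not> le v u"
  shows "card (down u) = card (down v) \<and> weight u = weight v"
proof -
  define C0 where "C0 = Om - (down u \<union> down v)"
  have C0: "C0 \<in> up_sets le Om"
    unfolding C0_def using down_in_down_sets u v by (intro compl_down_set_in_up_sets down_sets_Un)
  have insert_up: "insert x (Om - (down x \<union> down y)) \<in> up_sets le Om"
    if "x \<in> Om" "y \<in> Om" "\<not> le x y" for x y
  proof -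
    have "insert x (Om - (down x \<union> down y)) = Om - ((down x - {x}) \<union> down y)"
      using that unfolding down_def by auto
    then show ?thesis
      using that strict_down_in_down_sets down_in_down_sets
      by (simp add: compl_down_set_in_up_sets down_sets_Un)
  qed
  have "insert u C0 \<in> up_sets le Om" "insert v C0 \<in> up_sets le Om"
    unfolding C0_def using insert_up[OF u v incomparable(1)] insert_up[OF v u incomparable(2)]
    by (simp_all add: Un_commute)
  moreover have "u \<notin> C0" "v \<notin> C0"
    unfolding C0_def using self_in_down u v by auto
  moreover have "finite C0"
    unfolding C0_def using finite_Om by simp
  ultimately have "\<pi> (insert u C0) = \<pi> (insert v C0)"
    by (intro card_det) simp_all
  then have coeff_eq:
    "(if k = card (down u) then weight u else 0) = (if k = card (down v) then weight v else 0)"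
    if "k \<le> card (down u)" "k \<le> card (down v)" for k
    using coeff_pi_diff_insert[OF C0 u \<open>u \<notin> C0\<close> that(1)]
      coeff_pi_diff_insert[OF C0 v \<open>v \<notin> C0\<close> that(2)] by simp
  have "card (down u) = card (down v)"
  proof (rule ccontr)
    assume ne: "card (down u) \<noteq> card (down v)"
    let ?m = "min (card (down u)) (card (down v))"
    have "(if ?m = card (down u) then weight u else 0) = (if ?m = card (down v) then weight v else 0)"
      by (rule coeff_eq) simp_all
    then show False
      using ne weight_pos[OF u] weight_pos[OF v] by (auto simp: min_def split: if_splits)
  qed
  with coeff_eq[of "card (down u)"] show ?thesis
    by simp
qed

lemma le_iff_card_down_less:
  assumes x: "x \<in> Om" and y: "y \<in> Om"
  shows "le x y \<longleftrightarrow> x = y \<or> card (down x) < card (down y)"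
proof
  show "le x y \<Longrightarrow> x = y \<or> card (down x) < card (down y)"
    using card_down_strict_mono[OF x y] by blast
  assume "x = y \<or> card (down x) < card (down y)"
  then show "le x y"
  proof
    assume less: "card (down x) < card (down y)"
    then have "\<not> le y x"
      using card_down_strict_mono[OF y x] by auto
    with less show "le x y"
      using incomparable_same_down_card_and_weight[OF x y] by auto
  qed (use poset_refl x in simp)
qed

lemma hierarchical_if_card_determines_pi: "hierarchical Om le"
  using le_iff_card_down_less by (rule hierarchical_if_le_iff)

lemma eta_eq_if_same_level:
  assumes u: "u \<in> Om" and v: "v \<in> Om" and same_level: "len Om le u = len Om le v"
  shows "\<eta> u = \<eta> v"
proof (cases "u = v")
  case False
  note hier = hierarchical_if_card_determines_pi
  have "\<not> le u v" "\<not> le v u"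
    using hierarchical_le_iff[OF hier] u v same_level False by auto
  then have "weight u = weight v"
    using incomparable_same_down_card_and_weight[OF u v] by blast
  moreover have "down u - {u} = down v - {v}"
    using strict_down_eq_lower_levels[OF hier] u v same_level by simp
  moreover have "0 < prod \<tau> (down v - {v})"
    using tau_pos unfolding down_def by (intro prod_pos) auto
  ultimately show ?thesis
    unfolding weight_def by simp
qed simp

end

lemma card_determines_pi_iff_hierarchical:
  "(\<forall>C\<in>up_sets le Om. \<forall>D\<in>up_sets le Om. card C = card D \<longrightarrow> \<pi> C = \<pi> D) \<longleftrightarrow>
    hierarchical Om le \<and> (\<forall>u\<in>Om. \<forall>v\<in>Om. len Om le u = len Om le v \<longrightarrow> \<eta> u = \<eta> v)"
proof
  assume card_det: "\<forall>C\<in>up_sets le Om. \<forall>D\<in>up_sets le Om. card C = card D \<longrightarrow> \<pi> C = \<pi> D"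
  show "hierarchical Om le \<and> (\<forall>u\<in>Om. \<forall>v\<in>Om. len Om le u = len Om le v \<longrightarrow> \<eta> u = \<eta> v)"
    using hierarchical_if_card_determines_pi[OF card_det[rule_format]]
      eta_eq_if_same_level[OF card_det[rule_format]] by blast
next
  assume "hierarchical Om le \<and> (\<forall>u\<in>Om. \<forall>v\<in>Om. len Om le u = len Om le v \<longrightarrow> \<eta> u = \<eta> v)"
  then have hier: "hierarchical Om le"
    and eta_level: "\<And>u v. u \<in> Om \<Longrightarrow> v \<in> Om \<Longrightarrow> len Om le u = len Om le v \<Longrightarrow> \<eta> u = \<eta> v"
    by blast+
  show "\<forall>C\<in>up_sets le Om. \<forall>D\<in>up_sets le Om. card C = card D \<longrightarrow> \<pi> C = \<pi> D"
  proof (intro ballI impI)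
    fix C D
    assume "C \<in> up_sets le Om" "D \<in> up_sets le Om" "card C = card D"
    with hier eta_level show "\<pi> C = \<pi> D"
      by (rule piP_eq_if_card_eq)
  qed
qed

end

theorem theorem3p5:
  fixes Om :: "'a set" and le :: "'a \<Rightarrow> 'a \<Rightarrow> bool" and \<tau> \<eta> :: "'a \<Rightarrow> real"
  assumes fin: "finite Om"
    and poset: "is_poset Om le"
    and tau_pos: "\<forall>i\<in>Om. \<tau> i > 0"
    and eta_gt: "\<forall>i\<in>Om. \<eta> i > -1"
    and eta_nz: "\<forall>i\<in>Om. \<eta> i \<noteq> 0"
  defines "\<Theta> \<equiv> piP le \<tau> \<eta> Om ` up_sets le Om"
  shows "card \<Theta> \<ge> card Om + 1 \<and>
    (card \<Theta> = card Om + 1 \<longleftrightarrow>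
       (\<forall>C\<in>up_sets le Om. \<forall>D\<in>up_sets le Om. card C = card D \<longrightarrow> piP le \<tau> \<eta> Om C = piP le \<tau> \<eta> Om D)) \<and>
    (card \<Theta> = card Om + 1 \<longleftrightarrow>
       (\<forall>C\<in>up_sets le Om. \<forall>D\<in>up_sets le Om. piP le \<tau> \<eta> Om C = piP le \<tau> \<eta> Om D \<longleftrightarrow> card C = card D)) \<and>
    (card \<Theta> = card Om + 1 \<longleftrightarrow>
       (hierarchical Om le \<and> (\<forall>u\<in>Om. \<forall>v\<in>Om. len Om le u = len Om le v \<longrightarrow> \<eta> u = \<eta> v)))"
proof -
  interpret weighted_poset Om le \<tau> \<eta>
    using fin poset tau_pos eta_gt by unfold_locales
  show ?thesis
    using card_pi_values_ge card_pi_values_eq_iff_card_determines_pi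
      card_pi_values_eq_iff_pi_eq_iff_card_eq card_determines_pi_iff_hierarchical
    unfolding \<Theta>_def by argo
qed

end
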